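(* Let $q$ be a prime power, $m\ge2$, $1\le k<n$, and let $X\in \mathbb{F}_{q^m}^{k\times (n-k)}$ be chosen uniformly at random. Then $$\Pr\big(\mathrm{rs}[\,I_k\mid X\,] \text{ is a generalized Gabidulin code}\big)\leq \phi(m)\,q^{-(m-1)(n-k-1)(k-1)},$$ where $\phi$ is Euler's totient function.
   Context: $\mathrm{rs}$ denotes $\mathbb{F}_{q^m}$-row space. For $s$ coprime to $m$ and $g_1,\dots,g_n\in\mathbb{F}_{q^m}$ linearly independent over $\mathbb{F}_q$, the generalized Gabidulin code of dimension $k$ with parameter $s$ is the row space of the $k\times n$ matrix with $(i,j)$ entry $g_j^{q^{s(i-1)}}$; a generalized Gabidulin code is such a code for some such $s$ and $g_1,\dots,g_n$. *)

theory Defs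
  imports Main "HOL-Number_Theory.Totient"
begin

text \<open>Vectors of length n over a field are functions nat => 'a (only indices < n matter,
  entries outside are normalised to 0); k x n matrices are functions nat => nat => 'a.\<close>

definition prime_power :: "nat \<Rightarrow> bool" where
  "prime_power q \<longleftrightarrow> (\<exists>p r. prime p \<and> r > 0 \<and> q = p ^ r)"

definition subfield_Fq :: "nat \<Rightarrow> 'a::field set" where
  "subfield_Fq q = {x. x ^ q = x}"

definition Fq_lin_indep :: "nat \<Rightarrow> nat \<Rightarrow> (nat \<Rightarrow> 'a::field) \<Rightarrow> bool" where
  "Fq_lin_indep q n g \<longleftrightarrow>
     (\<forall>c. (\<forall>j<n. c j \<in> subfield_Fq q) \<longrightarrow> (\<Sum>j<n. c j * g j) = 0 \<longrightarrow> (\<forall>j<n. c j = 0))"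

definition row_space :: "nat \<Rightarrow> nat \<Rightarrow> (nat \<Rightarrow> nat \<Rightarrow> 'a::field) \<Rightarrow> (nat \<Rightarrow> 'a) set" where
  "row_space k n M = {(\<lambda>j. if j < n then (\<Sum>i<k. u i * M i j) else 0) | u. True}"

definition gab_matrix :: "nat \<Rightarrow> nat \<Rightarrow> (nat \<Rightarrow> 'a::field) \<Rightarrow> nat \<Rightarrow> nat \<Rightarrow> 'a" where
  "gab_matrix q s g i j = g j ^ (q ^ (s * i))"

definition is_gen_gabidulin :: "nat \<Rightarrow> nat \<Rightarrow> nat \<Rightarrow> (nat \<Rightarrow> 'a::field) set \<Rightarrow> bool" where
  "is_gen_gabidulin q m n C \<longleftrightarrow>
     (\<exists>k' s g. coprime s m \<and> Fq_lin_indep q n g \<and> C = row_space k' n (gab_matrix q s g))"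

definition sys_matrix :: "nat \<Rightarrow> (nat \<Rightarrow> nat \<Rightarrow> 'a::field) \<Rightarrow> nat \<Rightarrow> nat \<Rightarrow> 'a" where
  "sys_matrix k X i j = (if j < k then (if i = j then 1 else 0) else X i (j - k))"

definition matrices :: "nat \<Rightarrow> nat \<Rightarrow> (nat \<Rightarrow> nat \<Rightarrow> 'a::zero) set" where
  "matrices k l = {X. \<forall>i j. (k \<le> i \<or> l \<le> j) \<longrightarrow> X i j = 0}"

end

theory Submission
  imports Defs "HOL-Library.FuncSet"
begin

text \<open>
  A systematic generator matrix [I_k | X] is determined by its row space, and row spaces
  spanned by initial segments of the rows of one matrix are nested; so X is determined by
  any matrix some of whose first rows span its code. A generalized Gabidulin code has such a
  generator matrix in normal form: since x^(q^m) = x, only s mod m matters, a totative of m;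
  and dividing g by g_0 only rescales the rows, so one may assume g_0 = 1. Hence at most
  totient m * q^(m(n-1)) of the q^(mk(n-k)) matrices X yield such a code, and
  k(n-k) - (n-1) = (k-1)(n-k-1) gives the bound (even with m in place of m-1 in the exponent).
\<close>

lemma row_in_row_space:
  assumes "i < k"
  shows "(\<lambda>j. if j < n then M i j else 0) \<in> row_space k n M"
proof -
  have "(\<Sum>i'<k. of_bool (i' = i) * M i' j) = M i j" for j
    using assms by simp
  then show ?thesis
    unfolding row_space_def by (intro CollectI exI[of _ "\<lambda>i'. of_bool (i' = i)"]) (simp only:)
qed

lemma row_space_mono:
  assumes "k1 \<le> k2"
  shows "row_space k1 n M \<subseteq> row_space k2 n M"
proof
  fix v assume "v \<in> row_space k1 n M"
  then obtain u where v: "v = (\<lambda>j. if j < n then \<Sum>i<k1. u i * M i j else 0)"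
    unfolding row_space_def by blast
  have "{..<k2} \<inter> {i. i < k1} = {..<k1}"
    using assms by auto
  then have "(\<Sum>i<k2. (of_bool (i < k1) * u i) * M i j) = (\<Sum>i<k1. u i * M i j)" for j
    by (simp add: mult.assoc)
  then show "v \<in> row_space k2 n M"
    unfolding row_space_def v by (intro CollectI exI[of _ "\<lambda>i. of_bool (i < k1) * u i"]) (simp only:)
qed

lemma row_space_cong:
  assumes "\<And>i j. j < n \<Longrightarrow> M i j = M' i j"
  shows "row_space k n M = row_space k n M'"
  unfolding row_space_def using assms by (auto intro!: ext)

lemma row_space_scale_rows_subset:
  "row_space k n (\<lambda>i j. d i * M i j) \<subseteq> row_space k n M"
proof
  fix v assume "v \<in> row_space k n (\<lambda>i j. d i * M i j)"
  then obtain u where "v = (\<lambda>j. if j < n then \<Sum>i<k. u i * (d i * M i j) else 0)"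
    unfolding row_space_def by blast
  then show "v \<in> row_space k n M"
    unfolding row_space_def by (intro CollectI exI[of _ "\<lambda>i. u i * d i"]) (auto simp: mult.assoc)
qed

lemma row_space_scale_rows:
  assumes "\<And>i. d i \<noteq> (0::'a::field)"
  shows "row_space k n (\<lambda>i j. d i * M i j) = row_space k n M"
proof
  have "row_space k n (\<lambda>i j. inverse (d i) * (d i * M i j)) \<subseteq> row_space k n (\<lambda>i j. d i * M i j)"
    by (rule row_space_scale_rows_subset)
  moreover have "(\<lambda>i j. inverse (d i) * (d i * M i j)) = M"
    using assms by (simp flip: mult.assoc)
  ultimately show "row_space k n M \<subseteq> row_space k n (\<lambda>i j. d i * M i j)"
    by simp
qed (rule row_space_scale_rows_subset)

lemma row_space_sys_matrix_entry:
  assumes "v \<in> row_space k n (sys_matrix k Y)" and "k + j < n"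
  shows "v (k + j) = (\<Sum>i<k. v i * Y i j)"
proof -
  obtain u where v: "v = (\<lambda>j. if j < n then \<Sum>i<k. u i * sys_matrix k Y i j else 0)"
    using assms(1) unfolding row_space_def by blast
  have "v i = u i" if "i < k" for i
    using that assms(2) by (simp add: v sys_matrix_def if_distrib[of "(*) _"] cong: if_cong)
  then show ?thesis
    using assms(2) by (simp add: v sys_matrix_def)
qed

lemma sys_matrix_eq_if_row_space_subset:
  assumes "X \<in> matrices k (n - k)" and "Y \<in> matrices k (n - k)"
    and "row_space k n (sys_matrix k X) \<subseteq> row_space k n (sys_matrix k Y)"
  shows "X = Y"
proof (intro ext)
  fix i j
  show "X i j = Y i j"
  proof (cases "i < k \<and> j < n - k")
    case True
    let ?r = "\<lambda>j'. if j' < n then sys_matrix k X i j' else 0"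
    have "?r \<in> row_space k n (sys_matrix k Y)"
      using assms(3) row_in_row_space True by blast
    then have "?r (k + j) = (\<Sum>i'<k. ?r i' * Y i' j)"
      using True by (intro row_space_sys_matrix_entry) auto
    also have "\<dots> = (\<Sum>i'<k. of_bool (i' = i) * Y i' j)"
      using True by (intro sum.cong) (auto simp: sys_matrix_def)
    finally show ?thesis
      using True by (simp add: sys_matrix_def less_diff_conv add.commute)
  next
    case False
    then show ?thesis
      using assms(1,2) by (auto simp: matrices_def)
  qed
qed

lemma sys_matrix_eq_if_same_generator:
  assumes "X \<in> matrices k (n - k)" and "Y \<in> matrices k (n - k)"
    and "row_space k n (sys_matrix k X) = row_space k1 n M"
    and "row_space k n (sys_matrix k Y) = row_space k2 n M"
  shows "X = Y"
proof (cases "k1 \<le> k2")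
  case True
  then have "row_space k n (sys_matrix k X) \<subseteq> row_space k n (sys_matrix k Y)"
    unfolding assms(3,4) by (rule row_space_mono)
  with assms(1,2) show ?thesis
    by (rule sys_matrix_eq_if_row_space_subset)
next
  case False
  then have "row_space k n (sys_matrix k Y) \<subseteq> row_space k n (sys_matrix k X)"
    unfolding assms(3,4) by (intro row_space_mono) simp
  with assms(2,1) show ?thesis
    by (rule sys_matrix_eq_if_row_space_subset[symmetric])
qed

lemma card_matrices:
  "card (matrices k l :: (nat \<Rightarrow> nat \<Rightarrow> 'a::{finite,zero}) set) = card (UNIV :: 'a set) ^ (k * l)"
proof -
  let ?A = "{..<k} \<times> {..<l}"
  have "bij_betw (\<lambda>X. restrict (case_prod X) ?A) (matrices k l) (?A \<rightarrow>\<^sub>E (UNIV :: 'a set))"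
    by (rule bij_betwI[where g = "\<lambda>f i j. if i < k \<and> j < l then f (i, j) else 0"])
      (auto simp: matrices_def PiE_def extensional_def intro!: ext)
  then show ?thesis
    by (simp add: bij_betw_same_card card_PiE card_cartesian_product)
qed

lemma card_systematic_le_card_generators:
  fixes G :: "'p \<Rightarrow> nat \<Rightarrow> nat \<Rightarrow> 'a::field"
  assumes "finite P" and S: "S \<subseteq> matrices k (n - k)"
    and "\<And>X. X \<in> S \<Longrightarrow> \<exists>p\<in>P. \<exists>k'. row_space k n (sys_matrix k X) = row_space k' n (G p)"
  shows "card S \<le> card P"
proof -
  have "\<forall>X\<in>S. \<exists>p. p \<in> P \<and> (\<exists>k'. row_space k n (sys_matrix k X) = row_space k' n (G p))"
    using assms(3) by blast
  from bchoice[OF this] obtain f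
    where f: "\<forall>X\<in>S. f X \<in> P \<and> (\<exists>k'. row_space k n (sys_matrix k X) = row_space k' n (G (f X)))" ..
  have "inj_on f S"
  proof (rule inj_onI)
    fix X Y
    assume "X \<in> S" and "Y \<in> S" and "f X = f Y"
    then obtain k1 k2 where X: "row_space k n (sys_matrix k X) = row_space k1 n (G (f X))"
      and Y: "row_space k n (sys_matrix k Y) = row_space k2 n (G (f X))"
      using f by metis
    from \<open>X \<in> S\<close> \<open>Y \<in> S\<close> S show "X = Y"
      by (intro sys_matrix_eq_if_same_generator[OF _ _ X Y]) auto
  qed
  with f assms(1) show ?thesis
    by (intro card_inj_on_le) auto
qed

lemma finite_field_pow_card:
  fixes x :: "'a::{finite,field}"
  shows "x ^ card (UNIV :: 'a set) = x"
proof (cases "x = 0")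
  case True
  then show ?thesis by (simp add: zero_power finite_UNIV_card_ge_0)
next
  case False
  let ?U = "UNIV - {0::'a}"
  have "bij_betw ((*) x) ?U ?U"
    using False by (intro bij_betwI[where g = "\<lambda>y. y / x"]) auto
  then have "(\<Prod>y\<in>?U. y) = (\<Prod>y\<in>?U. x * y)"
    by (rule prod.reindex_bij_betw[symmetric])
  also have "\<dots> = x ^ (card (UNIV :: 'a set) - 1) * (\<Prod>y\<in>?U. y)"
    by (simp add: prod.distrib card_Diff_singleton)
  finally have "x ^ (card (UNIV :: 'a set) - 1) = 1"
    by simp
  moreover have "card (UNIV :: 'a set) = Suc (card (UNIV :: 'a set) - 1)"
    by (simp add: finite_UNIV_card_ge_0)
  ultimately show ?thesis
    by (metis power_Suc mult.right_neutral)
qed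

lemma finite_field_pow_pow_mod:
  fixes x :: "'a::{finite,field}"
  assumes "card (UNIV :: 'a set) = q ^ m"
  shows "x ^ q ^ a = x ^ q ^ (a mod m)"
proof -
  have pow_mult: "x ^ q ^ (m * t) = x" for x :: 'a and t
  proof (induction t)
    case (Suc t)
    have "q ^ (m * Suc t) = q ^ (m * t) * card (UNIV :: 'a set)"
      by (simp add: assms power_add)
    then have "x ^ q ^ (m * Suc t) = (x ^ q ^ (m * t)) ^ card (UNIV :: 'a set)"
      by (simp only: power_mult)
    then show ?case
      by (simp add: Suc.IH finite_field_pow_card)
  qed simp
  have "q ^ a = q ^ (m * (a div m)) * q ^ (a mod m)"
    by (simp flip: power_add)
  then have "x ^ q ^ a = (x ^ q ^ (m * (a div m))) ^ q ^ (a mod m)"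
    by (simp only: power_mult)
  then show ?thesis
    by (simp only: pow_mult)
qed

lemma gab_matrix_mod:
  assumes "card (UNIV :: 'a::{finite,field} set) = q ^ m"
  shows "gab_matrix q s (g :: nat \<Rightarrow> 'a) = gab_matrix q (s mod m) g"
proof (intro ext)
  fix i j
  have "g j ^ q ^ (s * i) = g j ^ q ^ (s * i mod m)"
    by (rule finite_field_pow_pow_mod[OF assms])
  also have "s * i mod m = s mod m * i mod m"
    by (simp add: mod_mult_left_eq)
  also have "g j ^ q ^ (s mod m * i mod m) = g j ^ q ^ (s mod m * i)"
    by (rule finite_field_pow_pow_mod[OF assms, symmetric])
  finally show "gab_matrix q s g i j = gab_matrix q (s mod m) g i j"
    unfolding gab_matrix_def .
qed

lemma row_space_gab_matrix_scale:
  assumes "c \<noteq> (0::'a::field)"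
  shows "row_space k n (gab_matrix q s (\<lambda>j. c * g j)) = row_space k n (gab_matrix q s g)"
proof -
  have "gab_matrix q s (\<lambda>j. c * g j) = (\<lambda>i j. c ^ q ^ (s * i) * gab_matrix q s g i j)"
    by (intro ext) (simp add: gab_matrix_def power_mult_distrib)
  then show ?thesis
    using assms by (simp add: row_space_scale_rows)
qed

lemma Fq_lin_indep_nonzero:
  assumes "Fq_lin_indep q n g" and "0 < q" and "j < n"
  shows "g j \<noteq> 0"
proof
  assume "g j = 0"
  let ?c = "\<lambda>j'. of_bool (j' = j)"
  have "\<forall>j'<n. ?c j' \<in> subfield_Fq q"
    using assms(2) by (simp add: subfield_Fq_def zero_power)
  moreover have "(\<Sum>j'<n. ?c j' * g j') = 0"
    using \<open>g j = 0\<close> by (intro sum.neutral) (simp add: of_bool_def)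
  ultimately have "?c j = 0"
    using assms(1) assms(3) unfolding Fq_lin_indep_def by (elim allE[of _ ?c] impE) auto
  then show False
    by simp
qed

lemma gen_gabidulin_normal_form:
  fixes C :: "(nat \<Rightarrow> 'a::{finite,field}) set"
  assumes card: "card (UNIV :: 'a set) = q ^ m" and "1 < m" and "0 < n"
    and "is_gen_gabidulin q m n C"
  obtains s h k' where "s \<in> totatives m" and "h \<in> {1..<n} \<rightarrow>\<^sub>E UNIV"
    and "C = row_space k' n (gab_matrix q s (h(0 := 1)))"
proof -
  obtain k' s g where "coprime s m" and "Fq_lin_indep q n g"
    and C: "C = row_space k' n (gab_matrix q s g)"
    using assms(4) unfolding is_gen_gabidulin_def by blast
  have "0 < q"
    using card finite_UNIV_card_ge_0[where 'a = 'a] \<open>1 < m\<close> by (simp add: zero_less_power_eq)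
  then have g0: "g 0 \<noteq> 0"
    using Fq_lin_indep_nonzero \<open>Fq_lin_indep q n g\<close> \<open>0 < n\<close> by blast
  define h where "h = restrict (\<lambda>j. g j / g 0) {1..<n}"
  have "C = row_space k' n (gab_matrix q s (\<lambda>j. g 0 * (g j / g 0)))"
    using C g0 by simp
  also have "\<dots> = row_space k' n (gab_matrix q s (\<lambda>j. g j / g 0))"
    using g0 by (rule row_space_gab_matrix_scale)
  also have "\<dots> = row_space k' n (gab_matrix q (s mod m) (\<lambda>j. g j / g 0))"
    by (simp only: gab_matrix_mod[OF card, of s])
  also have "\<dots> = row_space k' n (gab_matrix q (s mod m) (h(0 := 1)))"
    by (rule row_space_cong) (auto simp: gab_matrix_def h_def g0)
  finally have "C = row_space k' n (gab_matrix q (s mod m) (h(0 := 1)))" .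
  moreover have "s mod m \<in> totatives m"
    using \<open>coprime s m\<close> \<open>1 < m\<close> by (auto simp: in_totatives_iff intro!: gr0I)
  moreover have "h \<in> {1..<n} \<rightarrow>\<^sub>E UNIV"
    by (simp add: h_def)
  ultimately show ?thesis
    using that by blast
qed

lemma card_systematic_gen_gabidulin_le:
  assumes card: "card (UNIV :: 'a::{finite,field} set) = q ^ m" and "1 < m" and "0 < n"
  shows "card {X \<in> (matrices k (n - k) :: (nat \<Rightarrow> nat \<Rightarrow> 'a) set).
                 is_gen_gabidulin q m n (row_space k n (sys_matrix k X))}
         \<le> totient m * q ^ (m * (n - 1))"
proof -
  let ?P = "totatives m \<times> ({1..<n} \<rightarrow>\<^sub>E (UNIV :: 'a set))"
  have "card {X \<in> (matrices k (n - k) :: (nat \<Rightarrow> nat \<Rightarrow> 'a) set).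
                 is_gen_gabidulin q m n (row_space k n (sys_matrix k X))} \<le> card ?P"
  proof (rule card_systematic_le_card_generators[where G = "\<lambda>(s, h). gab_matrix q s (h(0 := 1))"])
    fix X :: "nat \<Rightarrow> nat \<Rightarrow> 'a"
    assume "X \<in> {X \<in> matrices k (n - k). is_gen_gabidulin q m n (row_space k n (sys_matrix k X))}"
    then obtain s h k' where "s \<in> totatives m" and "h \<in> {1..<n} \<rightarrow>\<^sub>E UNIV"
      and "row_space k n (sys_matrix k X) = row_space k' n (gab_matrix q s (h(0 := 1)))"
      using gen_gabidulin_normal_form[OF card \<open>1 < m\<close> \<open>0 < n\<close>] by blast
    then show "\<exists>p\<in>?P. \<exists>k'. row_space k n (sys_matrix k X) = row_space k' n ((\<lambda>(s, h). gab_matrix q s (h(0 := 1))) p)"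
      by (intro bexI[of _ "(s, h)"]) auto
  qed (auto simp: finite_PiE)
  also have "card ?P = totient m * q ^ (m * (n - 1))"
    by (simp add: card_cartesian_product card_PiE card totient_def power_mult)
  finally show ?thesis .
qed

lemma mult_diff_eq_pred_add:
  fixes k n :: nat
  assumes "1 \<le> k" and "k < n"
  shows "k * (n - k) = (n - 1) + (k - 1) * (n - k - 1)"
proof -
  define a b where "a = k - 1" and "b = n - k - 1"
  have "k = Suc a" and "n - k = Suc b" and "n - 1 = a + Suc b"
    using assms by (simp_all add: a_def b_def)
  then show ?thesis
    by simp
qed

lemma of_nat_div_power_le:
  fixes a t q e1 e2 e :: nat
  assumes "a \<le> t * q ^ e1" and "e1 + e \<le> e2" and "0 < q"
  shows "real a / real q ^ e2 \<le> real t / real q ^ e"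
proof -
  have "a * q ^ e \<le> t * q ^ (e1 + e)"
    using assms(1) by (simp add: power_add)
  also have "\<dots> \<le> t * q ^ e2"
    using assms(2,3) by (simp add: power_increasing)
  finally have "real a * real q ^ e \<le> real t * real q ^ e2"
    by (simp flip: of_nat_mult of_nat_power)
  then show ?thesis
    using assms(3) by (simp add: divide_simps)
qed

theorem theorem4p11:
  fixes q m k n :: nat
  assumes "prime_power q" and "card (UNIV :: 'a set) = q ^ m"
    and "m \<ge> 2" and "1 \<le> k" and "k < n"
  shows "real (card {X \<in> (matrices k (n - k) :: (nat \<Rightarrow> nat \<Rightarrow> 'a::{finite,field}) set).
                      is_gen_gabidulin q m n (row_space k n (sys_matrix k X))})
         / real (card (matrices k (n - k) :: (nat \<Rightarrow> nat \<Rightarrow> 'a) set))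
       \<le> real (totient m) / real q ^ ((m - 1) * (n - k - 1) * (k - 1))"
proof -
  have "0 < q"
    using assms(1) prime_gt_0_nat unfolding prime_power_def by auto
  have card_S: "card {X \<in> (matrices k (n - k) :: (nat \<Rightarrow> nat \<Rightarrow> 'a) set).
                      is_gen_gabidulin q m n (row_space k n (sys_matrix k X))}
                \<le> totient m * q ^ (m * (n - 1))"
    using assms(3,5) by (intro card_systematic_gen_gabidulin_le[OF assms(2)]) auto
  have card_M: "card (matrices k (n - k) :: (nat \<Rightarrow> nat \<Rightarrow> 'a) set) = q ^ (m * (k * (n - k)))"
    by (simp add: card_matrices assms(2) power_mult)
  have "m * (n - 1) + (m - 1) * (n - k - 1) * (k - 1) \<le> m * (k * (n - k))"
    using mult_diff_eq_pred_add[OF assms(4,5)] by (simp add: add_mult_distrib2)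
  from of_nat_div_power_le[OF card_S this \<open>0 < q\<close>] show ?thesis
    unfolding card_M by simp
qed

end
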